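(* Let $n\geq 2$. Let $\mu$ denote Shannon entropy on classical states, $\mu(x)=-\sum_{i}x_i\log x_i$, and let $\sigma$ denote von Neumann entropy on quantum states, $\sigma(\rho)=-\mathrm{tr}(\rho\log\rho)$. Then: (i) There is an order embedding $\phi:(\Delta^n,\sqsubseteq)\rightarrow(\Omega^n,\sqsubseteq)$ with $\sigma\circ\phi=\mu$. (ii) For any $m\geq 2$, there is no order embedding $\phi:(\Omega^n,\sqsubseteq)\rightarrow(\Delta^m,\sqsubseteq)$ with $\mu\circ\phi=\sigma$ (here $\mu$ is Shannon entropy on $\Delta^m$).
   Context: Classical states: for $k\geq 2$, $\Delta^k=\{x\in[0,1]^k:\sum_{i=1}^k x_i=1\}$; $e_i$ denotes the pure state with $x_i=1$. The Bayesian order $\sqsubseteq$ on $\Delta^k$ is defined recursively. For $x,y\in\Delta^2$: $x\sqsubseteq y$ iff $(y_1\leq x_1\leq 1/2)$ or $(1/2\leq x_1\leq y_1)$. For $k\geq 2$ and $x,y\in\Delta^{k+1}$: $x\sqsubseteq y$ iff for every $i\in\{1,\ldots,k+1\}$ with $x,y\in\mathrm{dom}(p_i)$ one has $p_i(x)\sqsubseteq p_i(y)$ in $\Delta^k$, where the Bayesian projection $p_i:\Delta^{k+1}\rightharpoonup\Delta^k$ has domain $\Delta^{k+1}\setminus\{e_i\}$ and is given by $p_i(x)=\frac{1}{1-x_i}(x_1,\ldots,x_{i-1},x_{i+1},\ldots,x_{k+1})$. Quantum states: $\Omega^n$ is the set of density operators on an $n$-dimensional complex Hilbert space $\mathcal{H}^n$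 (self-adjoint, positive linear operators of trace $1$). An observable is a self-adjoint operator $e$ on $\mathcal{H}^n$; throughout, observables are assumed to have $\mathrm{spec}(e)=\{1,\ldots,n\}$. For such $e$ and $\rho\in\Omega^n$, $\mathrm{spec}(\rho|e):=(\mathrm{tr}(p_e^1\rho),\ldots,\mathrm{tr}(p_e^n\rho))\in\Delta^n$, where $p_e^\lambda$ is the orthogonal projection onto the eigenspace of $e$ for eigenvalue $\lambda$. The spectral order on $\Omega^n$: $\rho\sqsubseteq\tau$ iff there is an observable $e$ with $[\rho,e]=[\tau,e]=0$ (where $[a,b]=ab-ba$) and $\mathrm{spec}(\rho|e)\sqsubseteq\mathrm{spec}(\tau|e)$ in the Bayesian order on $\Delta^n$. An order embedding $\phi:P\to Q$ between posets is a map with $x\sqsubseteq y\iff \phi(x)\sqsubseteq\phi(y)$ for all $x,y\in P$. Convention $0\log 0=0$. *)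

theory Defs
  imports "HOL-Analysis.Analysis"
begin

text \<open>A classical state in Delta^k is represented as a function nat => real,
  coordinate i (0-based, i < k) standing for x_(i+1); coordinates >= k are 0.\<close>

definition Delta :: "nat \<Rightarrow> (nat \<Rightarrow> real) set" where
  "Delta k = {x. (\<forall>i<k. 0 \<le> x i) \<and> (\<forall>i\<ge>k. x i = 0) \<and> (\<Sum>i<k. x i) = 1}"

definition pure :: "nat \<Rightarrow> (nat \<Rightarrow> real)" where
  "pure i = (\<lambda>j. if j = i then 1 else 0)"

text \<open>Bayesian projection p_i : Delta^(k+1) -> Delta^k (defined off pure i).\<close>
definition bproj :: "nat \<Rightarrow> nat \<Rightarrow> (nat \<Rightarrow> real) \<Rightarrow> (nat \<Rightarrow> real)" where
  "bproj k i x = (\<lambda>j. if j < k then (if j < i then x j else x (Suc j)) / (1 - x i) else 0)"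

fun bayes :: "nat \<Rightarrow> (nat \<Rightarrow> real) \<Rightarrow> (nat \<Rightarrow> real) \<Rightarrow> bool" where
  "bayes (Suc (Suc 0)) x y =
     ((y 0 \<le> x 0 \<and> x 0 \<le> 1/2) \<or> (1/2 \<le> x 0 \<and> x 0 \<le> y 0))"
| "bayes (Suc (Suc (Suc k))) x y =
     (\<forall>i < Suc (Suc (Suc k)).
        x \<in> Delta (Suc (Suc (Suc k))) - {pure i} \<and> y \<in> Delta (Suc (Suc (Suc k))) - {pure i}
        \<longrightarrow> bayes (Suc (Suc k)) (bproj (Suc (Suc k)) i x) (bproj (Suc (Suc k)) i y))"
| "bayes _ x y = False"

definition shannon :: "nat \<Rightarrow> (nat \<Rightarrow> real) \<Rightarrow> real" where
  "shannon k x = - (\<Sum>i<k. x i * ln (x i))"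
  (* note: ln 0 = 0 in Isabelle, so 0 log 0 = 0 *)

definition cinner :: "complex^'n::finite \<Rightarrow> complex^'n \<Rightarrow> complex" where
  "cinner v w = (\<Sum>i\<in>UNIV. cnj (v$i) * w$i)"

definition adj :: "complex^'n::finite^'n \<Rightarrow> complex^'n^'n" where
  "adj A = (\<chi> i j. cnj (A$j$i))"

definition hermitian :: "complex^'n::finite^'n \<Rightarrow> bool" where
  "hermitian A \<longleftrightarrow> adj A = A"

definition density_ops :: "(complex^'n::finite^'n) set" where
  "density_ops = {\<rho>. hermitian \<rho> \<and> (\<forall>v. 0 \<le> Re (cinner v (\<rho> *v v))) \<and> trace \<rho> = 1}"

definition eigenspace :: "complex^'n::finite^'n \<Rightarrow> complex \<Rightarrow> (complex^'n) set" where
  "eigenspace A c = {v. A *v v = c *s v}"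

definition mat_spec :: "complex^'n::finite^'n \<Rightarrow> complex set" where
  "mat_spec A = {c. \<exists>v. v \<noteq> 0 \<and> A *v v = c *s v}"

definition orth_proj_onto :: "(complex^'n::finite) set \<Rightarrow> complex^'n^'n \<Rightarrow> bool" where
  "orth_proj_onto S P \<longleftrightarrow> P ** P = P \<and> adj P = P \<and> range (\<lambda>v. P *v v) = S"

definition proj_onto :: "(complex^'n::finite) set \<Rightarrow> complex^'n^'n" where
  "proj_onto S = (THE P. orth_proj_onto S P)"

definition observable :: "complex^'n::finite^'n \<Rightarrow> bool" where
  "observable e \<longleftrightarrow> hermitian e \<and> mat_spec e = of_nat ` {1..CARD('n)}"

text \<open>spec(rho|e), 0-based: coordinate j is tr(p_e^(j+1) rho).\<close>
definition spec_wrt :: "complex^'n::finite^'n \<Rightarrow> complex^'n^'n \<Rightarrow> (nat \<Rightarrow> real)" where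
  "spec_wrt \<rho> e = (\<lambda>j. if j < CARD('n)
      then Re (trace (proj_onto (eigenspace e (of_nat (Suc j))) ** \<rho>)) else 0)"

definition spectral_le :: "complex^'n::finite^'n \<Rightarrow> complex^'n^'n \<Rightarrow> bool" where
  "spectral_le \<rho> \<tau> \<longleftrightarrow> (\<exists>e. observable e \<and> \<rho> ** e = e ** \<rho> \<and> \<tau> ** e = e ** \<tau>
      \<and> bayes CARD('n) (spec_wrt \<rho> e) (spec_wrt \<tau> e))"

definition mat_fun :: "(real \<Rightarrow> real) \<Rightarrow> complex^'n::finite^'n \<Rightarrow> complex^'n^'n" where
  "mat_fun f A = (\<Sum>c\<in>mat_spec A. f (Re c) *\<^sub>R proj_onto (eigenspace A c))"

definition vn_entropy :: "complex^'n::finite^'n \<Rightarrow> real" where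
  "vn_entropy \<rho> = - Re (trace (mat_fun (\<lambda>t. t * ln t) \<rho>))"

definition order_embedding ::
  "'a set \<Rightarrow> ('a \<Rightarrow> 'a \<Rightarrow> bool) \<Rightarrow> 'b set \<Rightarrow> ('b \<Rightarrow> 'b \<Rightarrow> bool) \<Rightarrow> ('a \<Rightarrow> 'b) \<Rightarrow> bool" where
  "order_embedding P leP Q leQ \<phi> \<longleftrightarrow>
     \<phi> ` P \<subseteq> Q \<and> (\<forall>x\<in>P. \<forall>y\<in>P. leP x y \<longleftrightarrow> leQ (\<phi> x) (\<phi> y))"

end

(*
  (i) A classical state x goes to the diagonal density matrix diag x, whose eigenvalues are the
  x_i, so its von Neumann entropy is the Shannon entropy of x. The observable diag(1,...,n)
  commutes with every diagonal state and reads x off, so the Bayesian order transfers forward.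
  Conversely, an observable has n distinct eigenvalues, hence one-dimensional eigenspaces; if it
  commutes with diag x, its unit eigenvectors are eigenvectors of diag x, and choosing one nonzero
  coordinate of each (via the determinant of the unitary they form) shows spec(diag x|e) = x o s
  for a permutation s depending on e alone. The Bayesian order is invariant under simultaneous
  permutation of coordinates, since p_i(x o s) = p_(s i)(x) o s' for the permutation s' that s
  induces on the remaining indices.

  (ii) Pure states have zero von Neumann entropy, while the only classical states of zero Shannon
  entropy are the finitely many pure states e_i. Two pure states given by unit vectors that are
  neither collinear nor orthogonal are incomparable: an observable commuting with both has both
  vectors as eigenvectors, which are then collinear (equal eigenvalue) or orthogonal (distinct
  ones). The normalisations of e_a + t e_b (t = 0, 1, 2, ...) give infinitely many such states;
  an entropy preserving embedding would map them into a finite set, so it would identify two of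
  them, contradicting reflexivity of the Bayesian order.
*)
theory Submission
  imports Defs
begin

section \<open>The complex inner product\<close>

lemma cinner_scale_right: "cinner v (c *s w) = c * cinner v w"
  by (simp add: cinner_def sum_distrib_left mult_ac)

lemma cinner_scale_left: "cinner (c *s v) w = cnj c * cinner v w"
  by (simp add: cinner_def sum_distrib_left mult_ac)

lemma cinner_diff_right: "cinner v (w - z) = cinner v w - cinner v z"
  by (simp add: cinner_def algebra_simps sum_subtractf)

lemma cinner_sum_right: "cinner v (\<Sum>a\<in>A. f a) = (\<Sum>a\<in>A. cinner v (f a))"
  by (simp add: cinner_def sum_distrib_left sum.swap[of _ A])

lemma cinner_commute: "cinner w v = cnj (cinner v w)"
  by (simp add: cinner_def mult.commute)

lemma cinner_self: "cinner v v = complex_of_real (\<Sum>i\<in>UNIV. (cmod (v$i))\<^sup>2)"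
  unfolding cinner_def of_real_sum complex_norm_square by (simp add: mult.commute)

lemma cinner_self_eq_0: "cinner v v = 0 \<longleftrightarrow> v = 0"
  unfolding cinner_self of_real_eq_0_iff by (simp add: sum_nonneg_eq_0_iff vec_eq_iff)

lemma exists_unit_multiple:
  assumes "v \<noteq> 0"
  obtains c where "cinner (c *s v) (c *s v) = 1"
proof -
  define r where "r = (\<Sum>i\<in>UNIV. (cmod (v$i))\<^sup>2)"
  have "r \<noteq> 0" using assms cinner_self_eq_0[of v] by (metis cinner_self of_real_0 r_def)
  moreover have "r \<ge> 0" unfolding r_def by (simp add: sum_nonneg)
  ultimately have "sqrt r > 0" "sqrt r * sqrt r = r" by simp_all
  then have r: "1 / sqrt r * (1 / sqrt r * r) = 1" by (simp add: field_simps)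
  let ?c = "complex_of_real (1 / sqrt r)"
  have "cinner (?c *s v) (?c *s v) = complex_of_real (1 / sqrt r * (1 / sqrt r * r))"
    using cinner_self[of v]
    by (simp only: cinner_scale_left cinner_scale_right complex_cnj_complex_of_real of_real_mult
        flip: r_def)
  then show ?thesis using r by (intro that) simp
qed

lemma cinner_unit_nonzero: "cinner w w = 1 \<Longrightarrow> w \<noteq> 0"
  by (metis cinner_self_eq_0 zero_neq_one)

lemma orthogonal_set_independent:
  fixes S :: "(complex^'n::finite) set"
  assumes "0 \<notin> S" and orth: "\<And>v w. v \<in> S \<Longrightarrow> w \<in> S \<Longrightarrow> v \<noteq> w \<Longrightarrow> cinner v w = 0"
  shows "vec.independent S"
  unfolding vec.independent_explicit_finite_subsets
proof (intro allI impI ballI)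
  fix T u v assume T: "T \<subseteq> S" "finite T" and comb: "(\<Sum>w\<in>T. u w *s w) = 0" and v: "v \<in> T"
  have others: "u w * cinner v w = 0" if "w \<in> T - {v}" for w
    using that T v orth[of v w] by auto
  have "0 = cinner v (\<Sum>w\<in>T. u w *s w)" by (simp add: comb cinner_def)
  also have "\<dots> = (\<Sum>w\<in>T. u w * cinner v w)" by (simp add: cinner_sum_right cinner_scale_right)
  also have "\<dots> = u v * cinner v v" using others by (simp add: sum.remove[OF T(2) v] sum.neutral)
  finally have "u v * cinner v v = 0" by simp
  moreover have "cinner v v \<noteq> 0" using v T assms(1) by (auto simp: cinner_self_eq_0)
  ultimately show "u v = 0" by simp
qed

lemma orthogonal_family_card_le:
  fixes h :: "'i \<Rightarrow> complex^'n::finite"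
  assumes nz: "\<And>a. a \<in> I \<Longrightarrow> h a \<noteq> 0"
    and orth: "\<And>a b. a \<in> I \<Longrightarrow> b \<in> I \<Longrightarrow> a \<noteq> b \<Longrightarrow> cinner (h a) (h b) = 0"
  shows "finite I \<and> card I \<le> CARD('n)"
proof -
  have inj: "inj_on h I"
  proof (rule inj_onI, rule ccontr)
    fix a b assume ab: "a \<in> I" "b \<in> I" "h a = h b" "a \<noteq> b"
    then have "cinner (h a) (h a) = 0" using orth[of a b] by simp
    then show False using nz[OF ab(1)] cinner_self_eq_0 by blast
  qed
  have "vec.independent (h ` I)"
  proof (rule orthogonal_set_independent)
    show "0 \<notin> h ` I" using nz by force
    show "cinner v w = 0" if "v \<in> h ` I" "w \<in> h ` I" "v \<noteq> w" for v w
      using that orth by auto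
  qed
  then have "finite (h ` I) \<and> card (h ` I) \<le> CARD('n)"
    using vec.finiteI_independent vec.independent_card_le_dim[OF subset_UNIV] vec_dim_card by metis
  then show ?thesis using inj by (simp add: card_image finite_image_iff)
qed

section \<open>Hermitian matrices, projections and observables\<close>

lemma hermitian_cinner:
  assumes "hermitian A"
  shows "cinner (A *v v) w = cinner v (A *v w)"
proof -
  have A: "cnj (A$i$j) = A$j$i" for i j
    using assms unfolding hermitian_def adj_def by (metis vec_lambda_beta)
  have "cinner (A *v v) w = (\<Sum>i\<in>UNIV. \<Sum>j\<in>UNIV. cnj (A$i$j) * cnj (v$j) * w$i)"
    by (simp add: cinner_def matrix_vector_mult_def sum_distrib_left sum_distrib_right mult_ac)
  also have "\<dots> = (\<Sum>j\<in>UNIV. \<Sum>i\<in>UNIV. cnj (A$i$j) * cnj (v$j) * w$i)"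
    by (rule sum.swap)
  also have "\<dots> = cinner v (A *v w)"
    by (simp add: cinner_def matrix_vector_mult_def sum_distrib_left mult_ac A)
  finally show ?thesis .
qed

lemma hermitian_eigenvectors_orthogonal:
  assumes "hermitian A" "A *v v = a *s v" "A *v w = b *s w" "Im a = 0" "a \<noteq> b"
  shows "cinner v w = 0"
proof -
  have "cnj a * cinner v w = b * cinner v w"
    using hermitian_cinner[OF assms(1), of v w] assms(2,3)
    by (simp add: cinner_scale_left cinner_scale_right)
  moreover have "cnj a = a" using assms(4) by (simp add: complex_eq_iff)
  ultimately have "(a - b) * cinner v w = 0" by (simp add: algebra_simps)
  with assms(5) show ?thesis by simp
qed

definition outer :: "complex^'n::finite \<Rightarrow> complex^'n \<Rightarrow> complex^'n^'n" where
  "outer u w = (\<chi> i j. u$i * cnj (w$j))"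

lemma outer_mult_vec: "outer u w *v v = cinner w v *s u"
  by (simp add: outer_def cinner_def matrix_vector_mult_def vec_eq_iff sum_distrib_left mult_ac)

lemma outer_mult: "outer a b ** outer c d = outer (cinner b c *s a) d"
  by (simp add: outer_def matrix_matrix_mult_def vec_eq_iff cinner_def sum_distrib_left
      sum_distrib_right mult_ac)

lemma adj_outer: "adj (outer a b) = outer b a"
  by (simp add: adj_def outer_def vec_eq_iff)

lemma adj_mult: "adj (A ** B) = adj B ** adj (A::complex^'n::finite^'n)"
  by (simp add: adj_def matrix_matrix_mult_def vec_eq_iff mult.commute)

lemma trace_outer: "trace (outer u w) = cinner w u"
  by (simp add: trace_def outer_def cinner_def mult.commute)

lemma trace_outer_mult: "trace (outer w w ** A) = cinner w (A *v w)"
proof -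
  have "trace (outer w w ** A) = (\<Sum>i\<in>UNIV. \<Sum>k\<in>UNIV. w$i * cnj (w$k) * A$k$i)"
    by (simp add: trace_def outer_def matrix_matrix_mult_def)
  also have "\<dots> = (\<Sum>k\<in>UNIV. \<Sum>i\<in>UNIV. w$i * cnj (w$k) * A$k$i)" by (rule sum.swap)
  also have "\<dots> = cinner w (A *v w)"
    by (simp add: cinner_def matrix_vector_mult_def sum_distrib_left mult_ac)
  finally show ?thesis .
qed

lemma orth_proj_onto_absorb:
  assumes P: "orth_proj_onto S P" and Q: "orth_proj_onto S Q"
  shows "Q ** P = P"
proof -
  have "(Q ** P) *v v = P *v v" for v
  proof -
    obtain z where z: "P *v v = Q *v z" using P Q unfolding orth_proj_onto_def by blast
    have "(Q ** P) *v v = (Q ** Q) *v z" by (simp add: matrix_vector_mul_assoc[symmetric] z)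
    also have "\<dots> = P *v v" using Q z unfolding orth_proj_onto_def by simp
    finally show ?thesis .
  qed
  then show ?thesis by (simp add: matrix_eq)
qed

lemma orth_proj_onto_unique:
  assumes P: "orth_proj_onto S P" and Q: "orth_proj_onto S Q"
  shows "P = Q"
proof -
  have "P = adj (Q ** P)" using P orth_proj_onto_absorb[OF P Q] by (simp add: orth_proj_onto_def)
  also have "\<dots> = P ** Q" using P Q by (simp add: adj_mult orth_proj_onto_def)
  also have "\<dots> = Q" by (rule orth_proj_onto_absorb[OF Q P])
  finally show ?thesis .
qed

lemma proj_onto_eqI: "orth_proj_onto S P \<Longrightarrow> proj_onto S = P"
  unfolding proj_onto_def using orth_proj_onto_unique by blast

lemma proj_onto_line:
  assumes w: "cinner w w = 1"
  shows "proj_onto (range (\<lambda>t. t *s w)) = outer w w"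
proof (rule proj_onto_eqI)
  have "range (\<lambda>v. outer w w *v v) = range (\<lambda>t. t *s w)"
  proof
    show "range (\<lambda>v. outer w w *v v) \<subseteq> range (\<lambda>t. t *s w)"
      by (auto simp: outer_mult_vec)
    show "range (\<lambda>t. t *s w) \<subseteq> range (\<lambda>v. outer w w *v v)"
    proof clarify
      fix t
      have "t *s w = outer w w *v (t *s w)" using w by (simp add: outer_mult_vec cinner_scale_right)
      then show "t *s w \<in> range (\<lambda>v. outer w w *v v)" by (rule range_eqI)
    qed
  qed
  then show "orth_proj_onto (range (\<lambda>t. t *s w)) (outer w w)"
    unfolding orth_proj_onto_def by (simp add: outer_mult w adj_outer)
qed

lemma observable_eigenvalue:
  fixes e :: "complex^'n::finite^'n"
  assumes "observable e" "v \<noteq> 0" "e *v v = c *s v"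
  obtains k where "k \<in> {1..CARD('n)}" "c = of_nat k"
proof -
  have "c \<in> mat_spec e" using assms(2,3) unfolding mat_spec_def by blast
  then show ?thesis using assms(1) that unfolding observable_def by auto
qed

lemma observable_eigenvector:
  fixes e :: "complex^'n::finite^'n"
  assumes "observable e" "k \<in> {1..CARD('n)}"
  obtains v where "v \<noteq> 0" "e *v v = of_nat k *s v"
proof -
  have "of_nat k \<in> mat_spec e" using assms unfolding observable_def by simp
  then show ?thesis using that unfolding mat_spec_def by blast
qed

lemma observable_eigenvectors_orthogonal:
  fixes e :: "complex^'n::finite^'n"
  assumes "observable e" "e *v v = of_nat k *s v" "e *v w = of_nat l *s w" "k \<noteq> l"
  shows "cinner v w = 0"
  using assms(1)
  by (intro hermitian_eigenvectors_orthogonal[OF _ assms(2,3)]) (simp_all add: observable_def assms(4))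

text \<open>An observable has CARD('n) distinct eigenvalues, so a second independent eigenvector
  for one of them would give CARD('n) + 1 mutually orthogonal nonzero vectors.\<close>
lemma observable_eigenvectors_collinear:
  fixes e :: "complex^'n::finite^'n"
  assumes obs: "observable e" and x: "x \<noteq> 0" "e *v x = c *s x" and y: "e *v y = c *s y"
  obtains t where "y = t *s x"
proof (rule ccontr)
  assume no_multiple: "\<not> thesis"
  obtain k where k: "k \<in> {1..CARD('n)}" "c = of_nat k" using observable_eigenvalue[OF obs x] .
  have xx: "cinner x x \<noteq> 0" using x(1) cinner_self_eq_0 by blast
  define y' where "y' = y - (cinner x y / cinner x x) *s x"
  have y'_nz: "y' \<noteq> 0" using no_multiple that unfolding y'_def by auto
  have ey': "e *v y' = c *s y'"
    by (simp add: y'_def matrix_vector_mult_diff_distrib vector_scalar_commute x y algebra_simps)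
  have xy': "cinner x y' = 0" using xx by (simp add: y'_def cinner_diff_right cinner_scale_right)
  have "\<forall>j\<in>{1..CARD('n)}. \<exists>v. v \<noteq> 0 \<and> e *v v = of_nat j *s v"
    using observable_eigenvector[OF obs] by metis
  from bchoice[OF this] obtain V
    where V: "\<And>j. j \<in> {1..CARD('n)} \<Longrightarrow> V j \<noteq> 0 \<and> e *v V j = of_nat j *s V j" by blast
  define h where "h j = (if j = 0 then y' else if j = k then x else V j)" for j
  define ev where "ev j = (if j = 0 then k else j)" for j
  have h: "h j \<noteq> 0 \<and> e *v h j = of_nat (ev j) *s h j" if "j \<in> {0..CARD('n)}" for j
    using that V[of j] y'_nz ey' x k by (auto simp: h_def ev_def)
  have "card {0..CARD('n)} \<le> CARD('n)"
  proof (rule orthogonal_family_card_le[where h = h, THEN conjunct2])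
    show "h a \<noteq> 0" if "a \<in> {0..CARD('n)}" for a using h[OF that] by blast
    show "cinner (h a) (h b) = 0" if ab: "a \<in> {0..CARD('n)}" "b \<in> {0..CARD('n)}" "a \<noteq> b" for a b
    proof (cases "ev a = ev b")
      case False
      then show ?thesis
        using obs h[OF ab(1)] h[OF ab(2)] observable_eigenvectors_orthogonal by blast
    next
      case True
      then have "(a = 0 \<and> b = k) \<or> (a = k \<and> b = 0)"
        using ab k(1) by (auto simp: ev_def split: if_splits)
      then show ?thesis using k(1) xy' by (auto simp: h_def cinner_commute[of y' x])
    qed
  qed
  then show False by simp
qed

lemma observable_unit_eigenvector:
  fixes e :: "complex^'n::finite^'n"
  assumes obs: "observable e" and j: "j < CARD('n)"
  obtains w where "cinner w w = 1" "e *v w = of_nat (Suc j) *s w"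
proof -
  obtain v where v: "v \<noteq> 0" "e *v v = of_nat (Suc j) *s v"
    using observable_eigenvector[OF obs, of "Suc j"] j by auto
  obtain c where "cinner (c *s v) (c *s v) = 1" using exists_unit_multiple[OF v(1)] .
  moreover have "e *v (c *s v) = of_nat (Suc j) *s (c *s v)"
    by (simp only: vector_scalar_commute v(2) vector_smult_assoc mult.commute)
  ultimately show ?thesis by (rule that)
qed

lemma spec_wrt_eq_cinner:
  fixes e :: "complex^'n::finite^'n"
  assumes obs: "observable e" and w: "cinner w w = 1"
    and ew: "e *v w = of_nat (Suc j) *s w" and j: "j < CARD('n)"
  shows "spec_wrt \<rho> e j = Re (cinner w (\<rho> *v w))"
proof -
  have "eigenspace e (of_nat (Suc j)) = range (\<lambda>t. t *s w)"
  proof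
    show "eigenspace e (of_nat (Suc j)) \<subseteq> range (\<lambda>t. t *s w)"
    proof
      fix y assume "y \<in> eigenspace e (of_nat (Suc j))"
      then obtain t where "y = t *s w"
        using observable_eigenvectors_collinear[OF obs cinner_unit_nonzero[OF w] ew]
        unfolding eigenspace_def by blast
      then show "y \<in> range (\<lambda>t. t *s w)" by blast
    qed
    show "range (\<lambda>t. t *s w) \<subseteq> eigenspace e (of_nat (Suc j))"
      using ew by (auto simp: eigenspace_def vector_scalar_commute)
  qed
  then show ?thesis using j by (simp add: spec_wrt_def proj_onto_line[OF w] trace_outer_mult)
qed

section \<open>Permutation invariance of the Bayesian order\<close>

lemma Delta_le_1: "x \<in> Delta k \<Longrightarrow> x i \<le> 1"
  by (cases "i < k") (auto simp: Delta_def intro: order.trans[OF member_le_sum[of i "{..<k}"]])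

lemma Delta_eq_pure_iff:
  assumes x: "x \<in> Delta k" and i: "i < k"
  shows "x = pure i \<longleftrightarrow> x i = 1"
proof
  assume xi: "x i = 1"
  have "(\<Sum>j\<in>{..<k} - {i}. x j) = 0"
    using x xi i by (simp add: Delta_def sum_diff1)
  then have "\<forall>j\<in>{..<k} - {i}. x j = 0"
    using x by (subst (asm) sum_nonneg_eq_0_iff) (auto simp: Delta_def)
  then show "x = pure i"
  proof (intro ext)
    fix j show "x j = pure i j"
      using \<open>\<forall>j\<in>{..<k} - {i}. x j = 0\<close> xi x by (cases "j < k") (auto simp: pure_def Delta_def)
  qed
qed (simp add: pure_def)

lemma Delta_permute:
  assumes s: "\<sigma> permutes {..<k}" and x: "x \<in> Delta k"
  shows "x \<circ> \<sigma> \<in> Delta k"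
  using x permutes_in_image[OF s] permutes_not_in[OF s] sum.permute[OF s, of x]
  by (auto simp: Delta_def)

definition skip :: "nat \<Rightarrow> nat \<Rightarrow> nat" where
  "skip i j = (if j < i then j else Suc j)"

definition unskip :: "nat \<Rightarrow> nat \<Rightarrow> nat" where
  "unskip i l = (if l < i then l else l - 1)"

lemma bproj_skip: "bproj k i x = (\<lambda>j. if j < k then x (skip i j) / (1 - x i) else 0)"
  by (simp add: bproj_def skip_def fun_eq_iff)

lemma skip_neq: "skip i j \<noteq> i"
  by (simp add: skip_def)

lemma inj_skip: "inj (skip i)"
  by (auto intro!: injI simp: skip_def split: if_splits)

lemma skip_unskip: "l \<noteq> i \<Longrightarrow> skip i (unskip i l) = l"
  by (auto simp: skip_def unskip_def)

lemma skip_image_lessThan: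
  assumes i: "i < Suc k"
  shows "skip i ` {..<k} = {..<Suc k} - {i}"
proof
  show "skip i ` {..<k} \<subseteq> {..<Suc k} - {i}" by (auto simp: skip_def)
  show "{..<Suc k} - {i} \<subseteq> skip i ` {..<k}"
  proof
    fix l assume l: "l \<in> {..<Suc k} - {i}"
    then have "l = skip i (unskip i l)" "unskip i l < k"
      using i by (auto simp: skip_def unskip_def)
    then show "l \<in> skip i ` {..<k}" by blast
  qed
qed

lemma bproj_Delta:
  assumes x: "x \<in> Delta (Suc k)" and i: "i < Suc k" and xi: "x i \<noteq> 1"
  shows "bproj k i x \<in> Delta k"
proof -
  have lt: "x i < 1" using Delta_le_1[OF x, of i] xi by simp
  have "inj_on (skip i) {..<k}" using inj_skip by (rule inj_on_subset) simp
  then have "(\<Sum>j<k. x (skip i j)) = sum x (skip i ` {..<k})" by (simp add: sum.reindex)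
  also have "\<dots> = (\<Sum>l\<in>{..<Suc k} - {i}. x l)" using skip_image_lessThan[OF i] by simp
  also have "\<dots> = 1 - x i" using x i by (simp add: Delta_def sum_diff1)
  finally have "(\<Sum>j<k. bproj k i x j) = 1"
    using lt by (simp add: bproj_skip flip: sum_divide_distrib)
  moreover have "skip i j < Suc k" if "j < k" for j
    using that by (auto simp: skip_def)
  ultimately show ?thesis
    using x lt unfolding Delta_def by (auto simp: bproj_skip)
qed

text \<open>The permutation of {..<k} induced by \<sigma> once i is deleted from its domain and \<sigma> i
  from its range (both renumbered by skip).\<close>
definition skip_perm :: "nat \<Rightarrow> (nat \<Rightarrow> nat) \<Rightarrow> nat \<Rightarrow> nat \<Rightarrow> nat" where
  "skip_perm k \<sigma> i = (\<lambda>j. if j < k then unskip (\<sigma> i) (\<sigma> (skip i j)) else j)"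

lemma skip_perm_permutes:
  assumes s: "\<sigma> permutes {..<Suc k}" and i: "i < Suc k"
  shows "skip_perm k \<sigma> i permutes {..<k}"
proof -
  have neq: "\<sigma> (skip i j) \<noteq> \<sigma> i" for j
    using permutes_inj[OF s] skip_neq by (metis injD)
  have skt: "skip (\<sigma> i) (skip_perm k \<sigma> i j) = \<sigma> (skip i j)" if "j < k" for j
    using that neq by (simp add: skip_perm_def skip_unskip)
  have inj: "inj_on (skip_perm k \<sigma> i) {..<k}"
  proof (rule inj_onI)
    fix j1 j2 assume "j1 \<in> {..<k}" "j2 \<in> {..<k}" "skip_perm k \<sigma> i j1 = skip_perm k \<sigma> i j2"
    then have "\<sigma> (skip i j1) = \<sigma> (skip i j2)" using skt by (metis lessThan_iff)
    then show "j1 = j2" using permutes_inj[OF s] inj_skip by (metis injD)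
  qed
  have "skip_perm k \<sigma> i ` {..<k} \<subseteq> {..<k}"
  proof clarify
    fix j assume j: "j < k"
    have "skip i j < Suc k" using j by (auto simp: skip_def)
    then have "\<sigma> (skip i j) < Suc k" "\<sigma> i < Suc k" using permutes_in_image[OF s] i by auto
    then show "skip_perm k \<sigma> i j < k" using j neq[of j] by (auto simp: skip_perm_def unskip_def)
  qed
  then have "bij_betw (skip_perm k \<sigma> i) {..<k} {..<k}"
    using inj by (simp add: bij_betw_def endo_inj_surj)
  then show ?thesis by (rule bij_imp_permutes) (simp add: skip_perm_def)
qed

lemma bproj_permute:
  assumes s: "\<sigma> permutes {..<Suc k}" and i: "i < Suc k"
  shows "bproj k i (x \<circ> \<sigma>) = bproj k (\<sigma> i) x \<circ> skip_perm k \<sigma> i"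
proof
  fix j
  have "\<sigma> (skip i j) \<noteq> \<sigma> i"
    using permutes_inj[OF s] skip_neq by (metis injD)
  moreover have "j < k \<Longrightarrow> skip_perm k \<sigma> i j < k"
    using permutes_in_image[OF skip_perm_permutes[OF s i], of j] by simp
  ultimately show "bproj k i (x \<circ> \<sigma>) j = (bproj k (\<sigma> i) x \<circ> skip_perm k \<sigma> i) j"
    by (simp add: bproj_skip skip_perm_def skip_unskip)
qed

lemma bayes_refl: "bayes (Suc (Suc k)) x x"
  by (induction k arbitrary: x) auto

lemma bayes_permute:
  "\<sigma> permutes {..<Suc (Suc k)} \<Longrightarrow> x \<in> Delta (Suc (Suc k)) \<Longrightarrow> y \<in> Delta (Suc (Suc k))
   \<Longrightarrow> bayes (Suc (Suc k)) x y \<Longrightarrow> bayes (Suc (Suc k)) (x \<circ> \<sigma>) (y \<circ> \<sigma>)"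
proof (induction k arbitrary: \<sigma> x y)
  case 0
  have "x 1 = 1 - x 0" "y 1 = 1 - y 0" using "0.prems"(2,3)
    by (simp_all add: Delta_def numeral_2_eq_2 lessThan_Suc)
  moreover have "\<sigma> 0 = 0 \<or> \<sigma> 0 = 1"
    using permutes_in_image[OF "0.prems"(1), of 0] by auto
  ultimately show ?case using "0.prems"(4) by auto
next
  case (Suc k)
  let ?K = "Suc (Suc (Suc k))"
  have s: "\<sigma> permutes {..<?K}" and x: "x \<in> Delta ?K" and y: "y \<in> Delta ?K" using Suc.prems by auto
  show ?case
  proof (simp only: bayes.simps, intro allI impI)
    fix i assume i: "i < ?K"
      and h: "x \<circ> \<sigma> \<in> Delta ?K - {pure i} \<and> y \<circ> \<sigma> \<in> Delta ?K - {pure i}"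
    have si: "\<sigma> i < ?K" using permutes_in_image[OF s] i by simp
    have xi: "x (\<sigma> i) \<noteq> 1" and yi: "y (\<sigma> i) \<noteq> 1" using h Delta_eq_pure_iff i by auto
    then have "x \<in> Delta ?K - {pure (\<sigma> i)} \<and> y \<in> Delta ?K - {pure (\<sigma> i)}"
      using x y Delta_eq_pure_iff si by auto
    then have "bayes (Suc (Suc k)) (bproj (Suc (Suc k)) (\<sigma> i) x) (bproj (Suc (Suc k)) (\<sigma> i) y)"
      using Suc.prems(4) si by simp
    then show "bayes (Suc (Suc k)) (bproj (Suc (Suc k)) i (x \<circ> \<sigma>)) (bproj (Suc (Suc k)) i (y \<circ> \<sigma>))"
      unfolding bproj_permute[OF s i]
      by (rule Suc.IH[OF skip_perm_permutes[OF s i] bproj_Delta[OF x si xi]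
            bproj_Delta[OF y si yi]])
  qed
qed

lemma bayes_permute_iff:
  assumes n: "n \<ge> 2" and s: "\<sigma> permutes {..<n}" and x: "x \<in> Delta n" and y: "y \<in> Delta n"
  shows "bayes n (x \<circ> \<sigma>) (y \<circ> \<sigma>) \<longleftrightarrow> bayes n x y"
proof
  obtain k where k: "n = Suc (Suc k)" using n by (metis add_2_eq_Suc le_Suc_ex)
  assume "bayes n (x \<circ> \<sigma>) (y \<circ> \<sigma>)"
  then have "bayes n (x \<circ> \<sigma> \<circ> inv \<sigma>) (y \<circ> \<sigma> \<circ> inv \<sigma>)"
    using bayes_permute[of "inv \<sigma>" k "x \<circ> \<sigma>" "y \<circ> \<sigma>"] permutes_inv[OF s]
      Delta_permute[OF s x] Delta_permute[OF s y] k by simp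
  then show "bayes n x y" using permutes_inverses(1)[OF s] by (simp add: comp_def)
next
  obtain k where k: "n = Suc (Suc k)" using n by (metis add_2_eq_Suc le_Suc_ex)
  assume "bayes n x y"
  then show "bayes n (x \<circ> \<sigma>) (y \<circ> \<sigma>)" using bayes_permute[of \<sigma> k x y] s x y k by simp
qed

section \<open>Diagonal density matrices\<close>

definition fin_enum :: "nat \<Rightarrow> 'n::finite" where
  "fin_enum = (SOME b. bij_betw b {..<CARD('n)} UNIV)"

definition fin_index :: "'n::finite \<Rightarrow> nat" where
  "fin_index = inv_into {..<CARD('n)} fin_enum"

lemma bij_betw_fin_enum: "bij_betw (fin_enum :: nat \<Rightarrow> 'n::finite) {..<CARD('n)} UNIV"
proof -
  have "\<exists>b. bij_betw b {..<CARD('n)} (UNIV::'n set)"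
    using ex_bij_betw_nat_finite[of "UNIV::'n set"] by (simp add: atLeast0LessThan)
  then show ?thesis unfolding fin_enum_def by (rule someI_ex)
qed

lemma bij_betw_fin_index: "bij_betw (fin_index :: 'n::finite \<Rightarrow> nat) UNIV {..<CARD('n)}"
  unfolding fin_index_def by (rule bij_betw_inv_into[OF bij_betw_fin_enum])

lemma fin_index_less: "fin_index (i::'n::finite) < CARD('n)"
  using bij_betw_fin_index unfolding bij_betw_def by blast

lemma fin_index_eq_iff: "fin_index (i::'n::finite) = fin_index j \<longleftrightarrow> i = j"
  using bij_betw_fin_index unfolding bij_betw_def by (auto dest: injD)

lemma fin_index_fin_enum: "j < CARD('n) \<Longrightarrow> fin_index (fin_enum j :: 'n::finite) = j"
  unfolding fin_index_def using bij_betw_fin_enum by (meson bij_betw_inv_into_left lessThan_iff)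

lemma sum_fin_index: "(\<Sum>i\<in>(UNIV::'n::finite set). h (fin_index i)) = (\<Sum>j<CARD('n). h j)"
  by (rule sum.reindex_bij_betw[OF bij_betw_fin_index])

definition diag_mat :: "('n::finite \<Rightarrow> complex) \<Rightarrow> complex^'n^'n" where
  "diag_mat g = (\<chi> i j. if i = j then g i else 0)"

lemma diag_mat_mult_vec: "diag_mat g *v v = (\<chi> i. g i * v$i)"
  by (simp add: diag_mat_def matrix_vector_mult_def vec_eq_iff if_distrib[of "\<lambda>a. a * _"]
      cong: if_cong)

lemma diag_mat_mult: "diag_mat g ** diag_mat h = diag_mat (\<lambda>i. g i * h i)"
  by (simp add: diag_mat_def matrix_matrix_mult_def vec_eq_iff if_distrib[of "\<lambda>a. a * _"]
      cong: if_cong)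

lemma diag_mat_commute: "diag_mat g ** diag_mat h = diag_mat h ** diag_mat g"
  by (simp add: diag_mat_mult mult.commute)

lemma adj_diag_mat: "adj (diag_mat g) = diag_mat (\<lambda>i. cnj (g i))"
  by (simp add: adj_def diag_mat_def vec_eq_iff)

lemma trace_diag_mat: "trace (diag_mat g) = (\<Sum>i\<in>UNIV. g i)"
  by (simp add: trace_def diag_mat_def)

lemma mat_spec_diag_mat:
  fixes g :: "'n::finite \<Rightarrow> complex"
  shows "mat_spec (diag_mat g) = range g"
proof
  show "mat_spec (diag_mat g) \<subseteq> range g"
  proof
    fix c assume "c \<in> mat_spec (diag_mat g)"
    then obtain v where v: "v \<noteq> 0" "diag_mat g *v v = c *s v" unfolding mat_spec_def by blast
    obtain i where i: "v$i \<noteq> 0" using v(1) by (metis vec_eq_iff zero_index)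
    have "g i * v$i = c * v$i"
      using arg_cong[OF v(2), of "\<lambda>w. w$i"] by (simp add: diag_mat_mult_vec)
    then have "c = g i" using i by simp
    then show "c \<in> range g" by simp
  qed
  show "range g \<subseteq> mat_spec (diag_mat g)"
  proof clarify
    fix i
    let ?v = "(\<chi> j. if j = i then 1 else 0) :: complex^'n"
    have "?v \<noteq> 0" "diag_mat g *v ?v = g i *s ?v" by (auto simp: diag_mat_mult_vec vec_eq_iff)
    then show "g i \<in> mat_spec (diag_mat g)" unfolding mat_spec_def by blast
  qed
qed

lemma proj_onto_eigenspace_diag_mat:
  fixes g :: "'n::finite \<Rightarrow> complex"
  shows "proj_onto (eigenspace (diag_mat g) c) = diag_mat (\<lambda>i. if g i = c then 1 else 0)"
proof (rule proj_onto_eqI)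
  let ?P = "diag_mat (\<lambda>i. if g i = c then 1 else 0) :: complex^'n^'n"
  have "range (\<lambda>v. ?P *v v) = eigenspace (diag_mat g) c"
  proof
    show "range (\<lambda>v. ?P *v v) \<subseteq> eigenspace (diag_mat g) c"
      by (auto simp: eigenspace_def diag_mat_mult_vec vec_eq_iff)
    show "eigenspace (diag_mat g) c \<subseteq> range (\<lambda>v. ?P *v v)"
    proof
      fix v assume "v \<in> eigenspace (diag_mat g) c"
      then have "g i * v$i = c * v$i" for i
        unfolding eigenspace_def by (simp add: diag_mat_mult_vec vec_eq_iff)
      then have "v = ?P *v v" by (auto simp: diag_mat_mult_vec vec_eq_iff)
      then show "v \<in> range (\<lambda>v. ?P *v v)" by (rule range_eqI)
    qed
  qed
  then show "orth_proj_onto (eigenspace (diag_mat g) c) ?P"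
    unfolding orth_proj_onto_def by (simp add: diag_mat_mult adj_diag_mat if_distrib cong: if_cong)
qed

lemma mat_fun_diag_mat: "mat_fun f (diag_mat g) = diag_mat (\<lambda>i. complex_of_real (f (Re (g i))))"
proof -
  let ?S = "\<Sum>c\<in>range g. f (Re c) *\<^sub>R diag_mat (\<lambda>i. if g i = c then 1 else 0)"
  have "?S$i$j = diag_mat (\<lambda>i. complex_of_real (f (Re (g i))))$i$j" for i j
  proof -
    have "?S$i$j = (\<Sum>c\<in>range g. f (Re c) *\<^sub>R (if i = j \<and> g i = c then 1 else 0 :: complex))"
      by (simp add: diag_mat_def vector_scaleR_component if_distrib[of "\<lambda>M. M $ j"] cong: if_cong)
        (auto intro!: sum.cong)
    also have "\<dots> = (\<Sum>c\<in>range g. if i = j \<and> g i = c then complex_of_real (f (Re c)) else 0)"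
      by (rule sum.cong) (auto simp: scaleR_conv_of_real)
    also have "\<dots> = diag_mat (\<lambda>i. complex_of_real (f (Re (g i))))$i$j"
      by (simp add: diag_mat_def sum.delta')
    finally show ?thesis .
  qed
  then show ?thesis
    by (simp add: mat_fun_def mat_spec_diag_mat proj_onto_eigenspace_diag_mat vec_eq_iff)
qed

definition diag_state :: "(nat \<Rightarrow> real) \<Rightarrow> complex^'n::finite^'n" where
  "diag_state x = diag_mat (\<lambda>i. complex_of_real (x (fin_index i)))"

lemma diag_state_density:
  assumes x: "x \<in> Delta CARD('n::finite)"
  shows "(diag_state x :: complex^'n^'n) \<in> density_ops"
proof -
  have nonneg: "0 \<le> x (fin_index (i::'n))" for i
    using x fin_index_less[of i] by (simp add: Delta_def)
  have "Re (cinner v ((diag_state x :: complex^'n^'n) *v v))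
      = (\<Sum>i\<in>UNIV. x (fin_index i) * ((Re (v$i))\<^sup>2 + (Im (v$i))\<^sup>2))" for v
    by (simp add: cinner_def diag_state_def diag_mat_mult_vec Re_sum algebra_simps power2_eq_square)
  then have "0 \<le> Re (cinner v ((diag_state x :: complex^'n^'n) *v v))" for v
    by (simp add: sum_nonneg nonneg)
  moreover have "trace (diag_state x :: complex^'n^'n) = 1"
    using x by (simp add: diag_state_def trace_diag_mat sum_fin_index Delta_def flip: of_real_sum)
  ultimately show ?thesis
    unfolding density_ops_def by (simp add: hermitian_def diag_state_def adj_diag_mat)
qed

lemma vn_entropy_diag_state:
  "vn_entropy (diag_state x :: complex^'n::finite^'n) = shannon CARD('n) x"
  by (simp add: vn_entropy_def diag_state_def mat_fun_diag_mat trace_diag_mat Re_sum shannon_def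
      sum_fin_index[of "\<lambda>j. x j * ln (x j)"])

definition index_observable :: "complex^'n::finite^'n" where
  "index_observable = diag_mat (\<lambda>i. of_nat (Suc (fin_index i)))"

lemma observable_index_observable: "observable (index_observable :: complex^'n::finite^'n)"
proof -
  have "range (\<lambda>i::'n. of_nat (Suc (fin_index i)) :: complex) = of_nat ` Suc ` {..<CARD('n)}"
    using bij_betw_imp_surj_on[OF bij_betw_fin_index] by (metis image_comp image_image)
  then show ?thesis
    by (simp add: observable_def hermitian_def index_observable_def adj_diag_mat mat_spec_diag_mat
        image_Suc_lessThan)
qed

lemma spec_wrt_index_observable:
  assumes x: "x \<in> Delta CARD('n::finite)"
  shows "spec_wrt (diag_state x :: complex^'n^'n) index_observable = x"
proof
  fix j
  show "spec_wrt (diag_state x :: complex^'n^'n) index_observable j = x j"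
  proof (cases "j < CARD('n)")
    case True
    define w :: "complex^'n" where "w = (\<chi> i. if i = fin_enum j then 1 else 0)"
    have "cinner w w = 1" by (simp add: w_def cinner_def if_distrib cong: if_cong)
    moreover have "index_observable *v w = of_nat (Suc j) *s w"
      by (auto simp: index_observable_def diag_mat_mult_vec w_def vec_eq_iff
          fin_index_fin_enum[OF True])
    moreover have "Re (cinner w ((diag_state x :: complex^'n^'n) *v w)) = x j"
      by (simp add: w_def cinner_def diag_state_def diag_mat_mult_vec if_distrib
          fin_index_fin_enum[OF True] cong: if_cong)
    ultimately show ?thesis
      using spec_wrt_eq_cinner[OF observable_index_observable _ _ True] by simp
  next
    case False
    then show ?thesis using x by (simp add: spec_wrt_def Delta_def)
  qed
qed

text \<open>The matrix with rows W j is unitary, so its determinant is nonzero and some term of the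
  Leibniz expansion is nonzero; that term picks a nonzero coordinate of each W j, bijectively.\<close>
lemma orthonormal_family_transversal:
  fixes W :: "nat \<Rightarrow> complex^'n::finite"
  assumes orthonormal:
    "\<And>j l. j < CARD('n) \<Longrightarrow> l < CARD('n) \<Longrightarrow> cinner (W j) (W l) = (if j = l then 1 else 0)"
  obtains q where "bij_betw q {..<CARD('n)} UNIV" "\<And>j. j < CARD('n) \<Longrightarrow> W j $ q j \<noteq> 0"
proof -
  define V :: "complex^'n^'n" where "V = (\<chi> l i. W (fin_index l) $ i)"
  have "(V ** adj V)$l$m = cinner (W (fin_index m)) (W (fin_index l))" for l m
    by (simp add: V_def adj_def matrix_matrix_mult_def cinner_def mult.commute)
  then have "V ** adj V = mat 1"
    by (simp add: vec_eq_iff mat_def orthonormal fin_index_less fin_index_eq_iff eq_commute)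
  then have "det V \<noteq> 0" by (metis det_mul det_I mult_zero_left zero_neq_one)
  then obtain p where p: "p permutes (UNIV::'n set)" "(\<Prod>l\<in>UNIV. V$l$(p l)) \<noteq> 0"
    unfolding det_def by (metis (mono_tags, lifting) mem_Collect_eq mult_eq_0_iff sum.neutral)
  show ?thesis
  proof
    show "bij_betw (p \<circ> fin_enum) {..<CARD('n)} UNIV"
      by (rule bij_betw_trans[OF bij_betw_fin_enum permutes_imp_bij[OF p(1)]])
    fix j assume "j < CARD('n)"
    have "V$(fin_enum j)$(p (fin_enum j)) \<noteq> 0" using p(2) by (metis UNIV_I finite prod_zero_iff)
    then show "W j $ (p \<circ> fin_enum) j \<noteq> 0"
      by (simp add: V_def fin_index_fin_enum[OF \<open>j < CARD('n)\<close>])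
  qed
qed

lemma spec_wrt_diag_state_permute:
  fixes e :: "complex^'n::finite^'n"
  assumes obs: "observable e"
  obtains \<sigma> where "\<sigma> permutes {..<CARD('n)}"
    "\<And>z. z \<in> Delta CARD('n) \<Longrightarrow> diag_state z ** e = e ** diag_state z
      \<Longrightarrow> spec_wrt (diag_state z :: complex^'n^'n) e = z \<circ> \<sigma>"
proof -
  let ?n = "CARD('n)"
  have "\<forall>j\<in>{..<?n}. \<exists>w. cinner w w = 1 \<and> e *v w = of_nat (Suc j) *s w"
    using observable_unit_eigenvector[OF obs] by (metis lessThan_iff)
  from bchoice[OF this] obtain W
    where W: "\<And>j. j < ?n \<Longrightarrow> cinner (W j) (W j) = 1 \<and> e *v W j = of_nat (Suc j) *s W j" by auto
  have orthonormal: "cinner (W j) (W l) = (if j = l then 1 else 0)" if "j < ?n" "l < ?n" for j l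
    using W[OF that(1)] observable_eigenvectors_orthogonal[OF obs W[OF that(1), THEN conjunct2]
        W[OF that(2), THEN conjunct2]] by auto
  obtain q where q: "bij_betw q {..<?n} UNIV" "\<And>j. j < ?n \<Longrightarrow> W j $ q j \<noteq> 0"
    using orthonormal_family_transversal[OF orthonormal] by blast
  define \<sigma> where "\<sigma> j = (if j < ?n then fin_index (q j) else j)" for j
  have "bij_betw (fin_index \<circ> q) {..<?n} {..<?n}"
    by (rule bij_betw_trans[OF q(1) bij_betw_fin_index])
  moreover have "\<And>j. j \<in> {..<?n} \<Longrightarrow> \<sigma> j = (fin_index \<circ> q) j" by (simp add: \<sigma>_def)
  ultimately have "bij_betw \<sigma> {..<?n} {..<?n}" using bij_betw_cong by metis
  then have "\<sigma> permutes {..<?n}" by (rule bij_imp_permutes) (simp add: \<sigma>_def)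
  moreover have "spec_wrt (diag_state z) e = z \<circ> \<sigma>"
    if z: "z \<in> Delta ?n" and comm: "diag_state z ** e = e ** diag_state z" for z
  proof
    fix j
    show "spec_wrt (diag_state z) e j = (z \<circ> \<sigma>) j"
    proof (cases "j < ?n")
      case True
      let ?D = "diag_state z :: complex^'n^'n"
      have Wj: "cinner (W j) (W j) = 1" "e *v W j = of_nat (Suc j) *s W j" using W[OF True] by auto
      have "e *v (?D *v W j) = ?D *v (e *v W j)" by (simp add: matrix_vector_mul_assoc comm)
      then have "e *v (?D *v W j) = of_nat (Suc j) *s (?D *v W j)"
        by (simp only: Wj(2) vector_scalar_commute)
      then obtain t where t: "?D *v W j = t *s W j"
        using observable_eigenvectors_collinear[OF obs cinner_unit_nonzero[OF Wj(1)] Wj(2)] by blast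
      have "t = complex_of_real (z (\<sigma> j))"
        using arg_cong[OF t, of "\<lambda>v. v $ q j"] q(2)[OF True] True
        by (simp add: diag_state_def diag_mat_mult_vec \<sigma>_def)
      then show ?thesis
        using spec_wrt_eq_cinner[OF obs Wj True] by (simp add: t cinner_scale_right Wj(1))
    next
      case False
      then show ?thesis using z by (simp add: spec_wrt_def \<sigma>_def Delta_def)
    qed
  qed
  ultimately show ?thesis by (rule that)
qed

lemma diag_state_order_embedding:
  assumes n: "CARD('n::finite) \<ge> 2"
  shows "order_embedding (Delta CARD('n)) (bayes CARD('n)) density_ops spectral_le
    (diag_state :: _ \<Rightarrow> complex^'n^'n)"
  unfolding order_embedding_def
proof (intro conjI ballI)
  show "diag_state ` Delta CARD('n) \<subseteq> (density_ops :: (complex^'n^'n) set)"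
    using diag_state_density by blast
  fix x y assume x: "x \<in> Delta CARD('n)" and y: "y \<in> Delta CARD('n)"
  show "bayes CARD('n) x y \<longleftrightarrow> spectral_le (diag_state x :: complex^'n^'n) (diag_state y)"
  proof
    assume le: "bayes CARD('n) x y"
    have commute:
      "(diag_state z :: complex^'n^'n) ** index_observable = index_observable ** diag_state z" for z
      by (simp add: diag_state_def index_observable_def diag_mat_commute)
    show "spectral_le (diag_state x :: complex^'n^'n) (diag_state y)"
      unfolding spectral_le_def
      by (intro exI[of _ index_observable] conjI observable_index_observable commute)
        (simp add: spec_wrt_index_observable x y le)
  next
    assume "spectral_le (diag_state x :: complex^'n^'n) (diag_state y)"
    then obtain e :: "complex^'n^'n" where obs: "observable e"
      and comm: "diag_state x ** e = e ** diag_state x" "diag_state y ** e = e ** diag_state y"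
      and le: "bayes CARD('n) (spec_wrt (diag_state x) e) (spec_wrt (diag_state y) e)"
      unfolding spectral_le_def by blast
    obtain \<sigma> where \<sigma>: "\<sigma> permutes {..<CARD('n)}"
      and spec: "\<And>z. z \<in> Delta CARD('n) \<Longrightarrow> diag_state z ** e = e ** diag_state z
        \<Longrightarrow> spec_wrt (diag_state z :: complex^'n^'n) e = z \<circ> \<sigma>"
      using spec_wrt_diag_state_permute[OF obs] by blast
    show "bayes CARD('n) x y"
      using le spec[OF x comm(1)] spec[OF y comm(2)] bayes_permute_iff[OF n \<sigma> x y] by simp
  qed
qed

section \<open>Pure states\<close>

lemma shannon_eq_0_imp_pure:
  assumes x: "x \<in> Delta m" and "shannon m x = 0"
  obtains i where "i < m" "x = pure i"
proof -
  have nonneg: "0 \<le> x j" and le1: "x j \<le> 1" for j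
    using x Delta_le_1[OF x] by (cases "j < m"; simp add: Delta_def)+
  have term_nonneg: "0 \<le> - (x j * ln (x j))" for j
    using nonneg[of j] le1[of j] by (cases "x j = 0") (auto simp: mult_nonneg_nonpos)
  have "(\<Sum>j<m. - (x j * ln (x j))) = 0"
    using \<open>shannon m x = 0\<close> by (simp add: shannon_def sum_negf)
  then have "x j * ln (x j) = 0" if "j < m" for j
    using that term_nonneg by (subst (asm) sum_nonneg_eq_0_iff) auto
  then have zero_one: "x j = 0 \<or> x j = 1" if "j < m" for j
    using that nonneg[of j] ln_eq_zero_iff[of "x j"] by fastforce
  have "\<exists>i<m. x i = 1"
  proof (rule ccontr)
    assume "\<not> (\<exists>i<m. x i = 1)"
    then have "(\<Sum>j<m. x j) = 0" using zero_one by simp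
    then show False using x by (simp add: Delta_def)
  qed
  then show ?thesis using that Delta_eq_pure_iff[OF x] by blast
qed

lemma finite_zero_shannon: "finite {x \<in> Delta m. shannon m x = 0}"
proof (rule finite_subset)
  show "{x \<in> Delta m. shannon m x = 0} \<subseteq> pure ` {..<m}"
    by (auto elim!: shannon_eq_0_imp_pure)
qed simp

lemma outer_density:
  assumes u: "cinner u u = 1"
  shows "outer u u \<in> density_ops"
proof -
  have "cinner v (outer u u *v v) = complex_of_real ((cmod (cinner u v))\<^sup>2)" for v
    by (simp add: outer_mult_vec cinner_scale_right cinner_commute[of v u]
        flip: complex_norm_square)
  then show ?thesis
    unfolding density_ops_def using u by (simp add: hermitian_def adj_outer trace_outer)
qed

lemma mat_spec_outer:
  assumes u: "cinner u u = 1" and c: "c \<in> mat_spec (outer u u)"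
  shows "c = 0 \<or> c = 1"
proof -
  obtain v where v: "v \<noteq> 0" "outer u u *v v = c *s v" using c unfolding mat_spec_def by blast
  have "c *s (c *s v) = (outer u u ** outer u u) *v v"
    by (simp add: v(2) vector_scalar_commute flip: matrix_vector_mul_assoc)
  also have "\<dots> = c *s v" using u v(2) by (simp add: outer_mult)
  finally have "(c * c - c) *s v = 0" by (simp add: algebra_simps)
  then have "c * (c - 1) = 0"
    using v(1) by (simp add: vec_eq_iff algebra_simps) (metis vec_eq_iff zero_index)
  then show ?thesis by simp
qed

lemma vn_entropy_outer:
  assumes u: "cinner u u = 1"
  shows "vn_entropy (outer u u) = 0"
proof -
  have "mat_fun (\<lambda>t. t * ln t) (outer u u) = 0"
    unfolding mat_fun_def
  proof (intro sum.neutral ballI)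
    fix c assume "c \<in> mat_spec (outer u u)"
    then have "c = 0 \<or> c = 1" by (rule mat_spec_outer[OF u])
    then show "(Re c * ln (Re c)) *\<^sub>R proj_onto (eigenspace (outer u u) c) = 0" by auto
  qed
  then show ?thesis unfolding vn_entropy_def by (simp add: trace_def)
qed

lemma commuting_outer_eigenvector:
  assumes u: "cinner u u = 1" and comm: "outer u u ** e = e ** outer u u"
  shows "e *v u = cinner u (e *v u) *s u"
proof -
  have "(outer u u ** e) *v u = cinner u (e *v u) *s u"
    by (simp add: outer_mult_vec flip: matrix_vector_mul_assoc)
  moreover have "(e ** outer u u) *v u = e *v u"
    by (simp add: outer_mult_vec u flip: matrix_vector_mul_assoc)
  ultimately show ?thesis using comm by simp
qed

lemma outer_not_spectral_le:
  fixes u w :: "complex^'n::finite"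
  assumes u: "cinner u u = 1" and w: "cinner w w = 1" and uw: "cinner u w \<noteq> 0"
    and not_collinear: "\<And>t. w \<noteq> t *s u"
  shows "\<not> spectral_le (outer u u) (outer w w)"
proof
  assume "spectral_le (outer u u) (outer w w)"
  then obtain e where obs: "observable e"
    and comm: "outer u u ** e = e ** outer u u" "outer w w ** e = e ** outer w w"
    unfolding spectral_le_def by blast
  have eu: "e *v u = cinner u (e *v u) *s u" by (rule commuting_outer_eigenvector[OF u comm(1)])
  have ew: "e *v w = cinner w (e *v w) *s w" by (rule commuting_outer_eigenvector[OF w comm(2)])
  obtain k where k: "cinner u (e *v u) = of_nat k"
    using observable_eigenvalue[OF obs cinner_unit_nonzero[OF u] eu] by blast
  obtain l where l: "cinner w (e *v w) = of_nat l"
    using observable_eigenvalue[OF obs cinner_unit_nonzero[OF w] ew] by blast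
  show False
  proof (cases "k = l")
    case True
    then have "e *v w = cinner u (e *v u) *s w" using ew k l by simp
    then obtain t where "w = t *s u"
      by (rule observable_eigenvectors_collinear[OF obs cinner_unit_nonzero[OF u] eu])
    then show False using not_collinear by blast
  next
    case False
    then have "cinner u w = 0"
      using observable_eigenvectors_orthogonal[OF obs, of u k w l] eu ew k l by simp
    then show False using uw by blast
  qed
qed

lemma exists_overlapping_unit_vectors:
  assumes "CARD('n::finite) \<ge> 2"
  obtains U :: "nat \<Rightarrow> complex^'n" where "\<And>t. cinner (U t) (U t) = 1"
    "\<And>s t. cinner (U s) (U t) \<noteq> 0" "\<And>s t c. s \<noteq> t \<Longrightarrow> U t \<noteq> c *s U s"
proof -
  obtain a b :: 'n where ab: "a \<noteq> b"
    using assms card_le_Suc0_iff_eq[of "UNIV :: 'n set"] by force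
  define V where "V t = (\<chi> i. if i = a then 1 else if i = b then of_nat t else (0::complex))" for t
  have "V t \<noteq> 0" for t by (auto simp: V_def vec_eq_iff)
  then have "\<forall>t. \<exists>c. cinner (c *s V t) (c *s V t) = 1" using exists_unit_multiple by metis
  from choice[OF this] obtain c where c: "\<And>t. cinner (c t *s V t) (c t *s V t) = 1" by blast
  have c_nz: "c t \<noteq> 0" for t using c[of t] by (auto simp: cinner_scale_left)
  have "cinner (V s) (V t) = (\<Sum>i\<in>{a, b}. cnj (V s $ i) * V t $ i)" for s t
    unfolding cinner_def by (rule sum.mono_neutral_right) (auto simp: V_def)
  then have "cinner (V s) (V t) = of_nat (Suc (s * t))" for s t
    using ab by (simp add: V_def)
  then have overlap: "cinner (c s *s V s) (c t *s V t) \<noteq> 0" for s t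
    using c_nz by (simp add: cinner_scale_left cinner_scale_right del: of_nat_Suc)
  have distinct: "c t *s V t \<noteq> d *s (c s *s V s)" if "s \<noteq> t" for s t d
  proof
    assume eq: "c t *s V t = d *s (c s *s V s)"
    have "c t = d * c s" using arg_cong[OF eq, of "\<lambda>v. v $ a"] by (simp add: V_def)
    moreover have "c t * of_nat t = d * c s * of_nat s"
      using arg_cong[OF eq, of "\<lambda>v. v $ b"] ab by (simp add: V_def mult.assoc)
    ultimately have "c t * of_nat t = c t * of_nat s" by simp
    then show False using c_nz[of t] that by simp
  qed
  show ?thesis by (rule that[of "\<lambda>t. c t *s V t"]) (use c overlap distinct in auto)
qed

lemma no_entropy_preserving_order_embedding:
  fixes \<phi> :: "complex^'n::finite^'n \<Rightarrow> nat \<Rightarrow> real"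
  assumes n: "CARD('n) \<ge> 2" and m: "m \<ge> 2"
    and emb: "order_embedding density_ops spectral_le (Delta m) (bayes m) \<phi>"
    and entropy: "\<forall>\<rho>\<in>density_ops. shannon m (\<phi> \<rho>) = vn_entropy \<rho>"
  shows False
proof -
  obtain U :: "nat \<Rightarrow> complex^'n" where unit: "\<And>t. cinner (U t) (U t) = 1"
    and overlap: "\<And>s t. cinner (U s) (U t) \<noteq> 0"
    and distinct: "\<And>s t c. s \<noteq> t \<Longrightarrow> U t \<noteq> c *s U s"
    using exists_overlapping_unit_vectors[OF n] by blast
  define \<rho> where "\<rho> t = outer (U t) (U t)" for t
  have density: "\<rho> t \<in> density_ops" for t unfolding \<rho>_def by (rule outer_density[OF unit])
  have "\<phi> (\<rho> t) \<in> {x \<in> Delta m. shannon m x = 0}" for t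
    using emb entropy density[of t] vn_entropy_outer[OF unit]
    unfolding order_embedding_def \<rho>_def by auto
  then have "finite (range (\<phi> \<circ> \<rho>))" by (auto intro: finite_subset[OF _ finite_zero_shannon])
  moreover have "inj (\<phi> \<circ> \<rho>)"
  proof (rule injI, rule ccontr)
    fix s t assume eq: "(\<phi> \<circ> \<rho>) s = (\<phi> \<circ> \<rho>) t" and "s \<noteq> t"
    obtain k where "m = Suc (Suc k)" using m by (metis add_2_eq_Suc le_Suc_ex)
    then have "bayes m (\<phi> (\<rho> s)) (\<phi> (\<rho> t))" using eq bayes_refl by simp
    then have "spectral_le (\<rho> s) (\<rho> t)" using emb density unfolding order_embedding_def by blast
    then show False
      using outer_not_spectral_le[OF unit unit overlap distinct[OF \<open>s \<noteq> t\<close>]] by (simp add: \<rho>_def)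
  qed
  ultimately show False using finite_imageD by fastforce
qed

theorem mainTheorem1:
  assumes "CARD('n::finite) \<ge> 2"
  shows "(\<exists>\<phi> :: (nat \<Rightarrow> real) \<Rightarrow> complex^'n^'n.
            order_embedding (Delta CARD('n)) (bayes CARD('n)) density_ops spectral_le \<phi>
            \<and> (\<forall>x\<in>Delta CARD('n). vn_entropy (\<phi> x) = shannon CARD('n) x))
       \<and> (\<forall>m\<ge>2. \<not> (\<exists>\<phi> :: complex^'n^'n \<Rightarrow> (nat \<Rightarrow> real).
            order_embedding density_ops spectral_le (Delta m) (bayes m) \<phi>
            \<and> (\<forall>\<rho>\<in>density_ops. shannon m (\<phi> \<rho>) = vn_entropy \<rho>)))"
  using diag_state_order_embedding[OF assms] vn_entropy_diag_state
    no_entropy_preserving_order_embedding[OF assms] by blast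

end
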